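(* Let $0<\alpha\leq2$, let $Z,\tilde Z$ be independent random variables with characteristic function $u\mapsto e^{-|u|^\alpha}$, let $\phi(x,y)=\mathbb{P}(Z\geq0,\tilde Z\geq0,x^{1/\alpha}Z\leq y^{1/\alpha}\tilde Z)$ for $x,y\geq0$, and let $D=(1+|\tilde Z/Z|^\alpha)^{-1}$. Let $T>0$. Then for $x,y,b>0$ and $0<a\leq T$: (i) $\phi(x,y)+\phi(y,x)=\frac14$; (ii) $\phi(ax,ay)=\phi(x,y)$; (iii) $\int_0^a\phi(a-x,x)\,dx=\frac a8$; (iv) $\int_a^T\phi(x-a,a)\,dx=\frac14\mathbb{E}[\min(T,aD^{-1})]-\frac a4$. *)

theory Defs
  imports "HOL-Probability.Probability"
begin

definition stable_phi ::
  "'a measure \<Rightarrow> ('a \<Rightarrow> real) \<Rightarrow> ('a \<Rightarrow> real) \<Rightarrow> real \<Rightarrow> real \<Rightarrow> real \<Rightarrow> real" where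
  "stable_phi M Z Z' \<alpha> x y =
     measure M {\<omega> \<in> space M. Z \<omega> \<ge> 0 \<and> Z' \<omega> \<ge> 0 \<and>
                 x powr (1 / \<alpha>) * Z \<omega> \<le> y powr (1 / \<alpha>) * Z' \<omega>}"

definition stable_D ::
  "('a \<Rightarrow> real) \<Rightarrow> ('a \<Rightarrow> real) \<Rightarrow> real \<Rightarrow> 'a \<Rightarrow> real" where
  "stable_D Z Z' \<alpha> \<omega> = inverse (1 + \<bar>Z' \<omega> / Z \<omega>\<bar> powr \<alpha>)"

end

theory Submission
  imports Defs "HOL-Probability.Probability"
begin

text \<open>
  Z and Z' have the same law \<mu> (Levy uniqueness), and its characteristic function
  exp (- |u| powr \<alpha>) is even and integrable, so \<mu> is symmetric and has no atoms. Hence the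
  joint law \<mu> \<otimes> \<mu> is invariant under the reflections (x, y) \<mapsto> (\<plusminus>x, \<plusminus>y) and under the swap,
  and every line through the origin is null. For (i), the events defining \<phi>(x, y) and \<phi>(y, x)
  cover the quadrant {Z \<ge> 0, Z' \<ge> 0} of probability 1/4 and overlap in a null line; (ii) is the
  homogeneity of the defining inequality, and (iii) follows from (i) by the substitution
  t \<mapsto> a - t. For (iv), when t > a the event defining \<phi>(t - a, a) is {Z > 0, Z' > 0, t \<le> a / D}
  up to a null set; as a / D depends only on |Z| and |Z'|, its probability is P(t \<le> a / D) / 4,
  and integrating over a < t < T is the layer-cake formula for E[min T (a / D)] - a.
\<close>

lemma power_le_exp_mult:
  fixes s :: real
  assumes "0 \<le> s" "0 < k"
  shows "s ^ k \<le> real k ^ k * exp s"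
proof -
  have "(s / k) ^ k \<le> (1 + s / k) ^ k"
    using assms by (intro power_mono) auto
  also have "\<dots> \<le> exp s"
    using assms by (intro exp_ge_one_plus_x_over_n_power_n) auto
  finally show ?thesis
    using assms by (simp add: power_divide divide_le_eq mult.commute)
qed

lemma integrable_exp_neg_abs_powr:
  fixes \<alpha> :: real
  assumes "0 < \<alpha>"
  shows "integrable lborel (\<lambda>t::real. exp (- (\<bar>t\<bar> powr \<alpha>)))"
proof -
  obtain k :: nat where "2 < real k * \<alpha>"
    using reals_Archimedean3[OF assms] by blast
  then have k: "0 < k" "2 \<le> real k * \<alpha>"
    by (auto intro: gr0I)
  define C where "C = 2 * real k ^ k"
  have "1 \<le> real k ^ k"
    using k by simp
  have bound: "exp (- (\<bar>t\<bar> powr \<alpha>)) \<le> C * inverse (1 + t\<^sup>2)" for t :: real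
  proof (cases "\<bar>t\<bar> \<le> 1")
    case True
    then have "t\<^sup>2 \<le> 1"
      by (simp add: abs_square_le_1)
    then have "1 + t\<^sup>2 \<le> C"
      using \<open>1 \<le> real k ^ k\<close> by (simp add: C_def)
    then have "1 \<le> C * inverse (1 + t\<^sup>2)"
      by (simp add: field_simps add_pos_nonneg)
    then show ?thesis
      by (rule order_trans[rotated]) simp
  next
    case False
    let ?s = "\<bar>t\<bar> powr \<alpha>"
    have "t\<^sup>2 = \<bar>t\<bar> powr 2"
      using False by (simp add: powr_realpow)
    also have "\<dots> \<le> \<bar>t\<bar> powr (real k * \<alpha>)"
      using False k by (intro powr_mono) auto
    also have "\<dots> = ?s ^ k"
      using False by (simp add: powr_powr powr_realpow[symmetric] mult.commute)
    also have "\<dots> \<le> real k ^ k * exp ?s"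
      using k by (intro power_le_exp_mult) auto
    finally have "exp (- ?s) * t\<^sup>2 \<le> real k ^ k"
      by (simp add: exp_minus field_simps)
    have "1 \<le> t\<^sup>2"
      using False abs_square_le_1[of t] by linarith
    then have "exp (- ?s) * (1 + t\<^sup>2) \<le> exp (- ?s) * (2 * t\<^sup>2)"
      by (intro mult_left_mono) auto
    also have "\<dots> \<le> C"
      using \<open>exp (- ?s) * t\<^sup>2 \<le> real k ^ k\<close> by (simp add: C_def)
    finally show ?thesis
      by (simp add: field_simps add_pos_nonneg)
  qed
  have "integrable lborel (\<lambda>t::real. C * inverse (1 + t\<^sup>2))"
    using integrable_inverse_1_plus_square by (simp add: set_integrable_def einterval_def)
  then show ?thesis
    by (rule Bochner_Integration.integrable_bound) (use bound in \<open>auto intro: abs_ge_self order_trans\<close>)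
qed

lemma (in real_distribution) measure_Ioc_le_integral_char:
  assumes char_int: "integrable lborel (char M)"
    and "a \<le> b" "measure M {a} = 0" "measure M {b} = 0"
  shows "measure M {a<..b} \<le> (b - a) / (2 * pi) * (\<integral>t. norm (char M t) \<partial>lborel)"
proof -
  define F where "F t = (iexp (- (t * a)) - iexp (- (t * b))) / (\<i> * t)" for t :: real
  define K where "K = (\<integral>t. norm (char M t) \<partial>lborel)"
  have F_bound: "norm (F t) \<le> b - a" for t
  proof (cases "t = 0")
    case False
    then show ?thesis
      using Levy_Inversion_aux2[of "- b" "- a" t] \<open>a \<le> b\<close> by (simp add: F_def)
  qed (simp add: F_def \<open>a \<le> b\<close>)
  have bound: "norm (complex_of_real (1 / (2 * pi)) * (CLBINT t=- real T..real T. F t * char M t))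
      \<le> (b - a) / (2 * pi) * K"
    for T :: nat
  proof -
    let ?I = "\<lambda>t. indicator (einterval (- real T) (real T)) t *\<^sub>R (F t * char M t)"
    have F_meas: "F \<in> borel_measurable borel"
      unfolding F_def by measurable
    have I_bound: "norm (?I t) \<le> (b - a) * norm (char M t)" for t
      using F_bound[of t] \<open>a \<le> b\<close> by (auto simp: indicator_def norm_mult intro: mult_right_mono)
    have bound_int: "integrable lborel (\<lambda>t. (b - a) * norm (char M t))"
      using char_int by simp
    then have "integrable lborel ?I"
      by (rule Bochner_Integration.integrable_bound)
        (use F_meas I_bound in \<open>auto intro: abs_ge_self order_trans\<close>)
    then have "norm (\<integral>t. ?I t \<partial>lborel) \<le> (\<integral>t. (b - a) * norm (char M t) \<partial>lborel)"
      using bound_int I_bound by (rule Bochner_Integration.integral_norm_bound_integral)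
    also have "(\<integral>t. ?I t \<partial>lborel) = (CLBINT t=- real T..real T. F t * char M t)"
      by (simp add: interval_lebesgue_integral_def set_lebesgue_integral_def)
    finally show ?thesis
      by (simp add: K_def norm_mult norm_divide divide_right_mono)
  qed
  have "(\<lambda>T. complex_of_real (1 / (2 * pi)) * (CLBINT t=- real T..real T. F t * char M t))
      \<longlonglongrightarrow> complex_of_real (measure M {a<..b})"
    using Levy_Inversion[OF assms(2-4)] by (simp add: F_def)
  then have "norm (complex_of_real (measure M {a<..b})) \<le> (b - a) / (2 * pi) * K"
    by (rule Lim_norm_ubound[OF trivial_limit_sequentially]) (use bound in auto)
  then show ?thesis
    by (simp add: K_def)
qed

lemma (in real_distribution) measure_singleton_eq_0_if_integrable_char:
  assumes "integrable lborel (char M)"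
  shows "measure M {c} = 0"
proof -
  define K where "K = (\<integral>t. norm (char M t) \<partial>lborel)"
  have "K \<ge> 0"
    unfolding K_def by simp
  have exists_non_atom: "\<exists>x\<in>{l<..<r}. measure M {x} = 0" if "l < r" for l r :: real
  proof (rule ccontr)
    assume "\<not> ?thesis"
    then have "{l<..<r} \<subseteq> {x. measure M {x} > 0}"
      using measure_nonneg[of M] by (force simp: order_le_less)
    then show False
      using countable_atoms countable_subset uncountable_open_interval that by metis
  qed
  have "measure M {c} \<le> 0 + e" if "e > 0" for e
  proof -
    define h where "h = e * pi / (K + 1)"
    have "h > 0"
      using \<open>e > 0\<close> \<open>K \<ge> 0\<close> by (simp add: h_def)
    then obtain l r where lr: "l \<in> {c - h<..<c}" "r \<in> {c<..<c + h}"
      and non_atoms: "measure M {l} = 0" "measure M {r} = 0"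
      using exists_non_atom[of "c - h" c] exists_non_atom[of c "c + h"] by auto
    then have "measure M {c} \<le> measure M {l<..r}"
      by (intro finite_measure_mono) auto
    also have "\<dots> \<le> (r - l) / (2 * pi) * K"
      unfolding K_def using lr non_atoms by (intro measure_Ioc_le_integral_char assms) auto
    also have "\<dots> \<le> (2 * h) / (2 * pi) * K"
      using lr \<open>K \<ge> 0\<close> by (intro mult_right_mono divide_right_mono) auto
    also have "\<dots> = e * K / (K + 1)"
      by (simp add: h_def)
    also have "\<dots> \<le> e"
      using \<open>e > 0\<close> \<open>K \<ge> 0\<close> by (simp add: divide_le_eq)
    finally show ?thesis
      by simp
  qed
  then have "measure M {c} \<le> 0"
    by (rule field_le_epsilon)
  then show ?thesis
    using measure_nonneg[of M "{c}"] by linarith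
qed

lemma interval_integral_eq_half_if_reflection_sum:
  fixes f :: "real \<Rightarrow> real"
  assumes "0 \<le> a" and f_int: "integrable lborel (\<lambda>t. indicator {0<..<a} t * f t)"
    and reflection_sum: "\<And>t. 0 < t \<Longrightarrow> t < a \<Longrightarrow> f t + f (a - t) = c"
  shows "(LBINT t=0..a. f t) = a * c / 2"
proof -
  let ?I = "\<lambda>g. \<integral>t. indicator {0<..<a} t * g t \<partial>lborel"
  have LBINT_eq: "(LBINT t=0..a. f t) = ?I f"
    using \<open>0 \<le> a\<close>
    by (simp add: interval_lebesgue_integral_def set_lebesgue_integral_def zero_ereal_def)
  have indicator_reflect: "indicator {0<..<a} (a - t) = (indicator {0<..<a} t :: real)" for t
    by (auto simp: indicator_def)
  have "?I f = \<bar>- 1\<bar> *\<^sub>R (\<integral>t. indicator {0<..<a} (a + - 1 * t) * f (a + - 1 * t) \<partial>lborel)"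
    by (rule lborel_integral_real_affine) simp
  also have "\<dots> = ?I (\<lambda>t. f (a - t))"
    by (simp add: indicator_reflect)
  finally have reflected: "?I f = ?I (\<lambda>t. f (a - t))" .
  have "integrable lborel (\<lambda>t. indicator {0<..<a} (a + - 1 * t) * f (a + - 1 * t))"
    using f_int by (rule lborel_integrable_real_affine) simp
  then have f_reflect_int: "integrable lborel (\<lambda>t. indicator {0<..<a} t * f (a - t))"
    by (simp add: indicator_reflect)
  have "2 * ?I f = ?I f + ?I (\<lambda>t. f (a - t))"
    using reflected by simp
  also have "\<dots> = (\<integral>t. indicator {0<..<a} t * f t + indicator {0<..<a} t * f (a - t) \<partial>lborel)"
    using f_int f_reflect_int by (rule Bochner_Integration.integral_add[symmetric])
  also have "\<dots> = (\<integral>t. indicator {0<..<a} t * c \<partial>lborel)"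
    by (intro Bochner_Integration.integral_cong refl)
      (auto simp: indicator_def reflection_sum distrib_left[symmetric])
  also have "\<dots> = a * c"
    using \<open>0 \<le> a\<close> by simp
  finally show ?thesis
    using LBINT_eq by simp
qed

lemma (in sigma_finite_measure) borel_measurable_measure_Pair:
  "S \<in> sets (N \<Otimes>\<^sub>M M) \<Longrightarrow> (\<lambda>x. measure M (Pair x -` S)) \<in> borel_measurable N"
  unfolding measure_def by (intro borel_measurable_enn2real measurable_emeasure_Pair)

lemma (in prob_space) interval_integral_prob_ge_eq_expectation_min:
  fixes h :: "'a \<Rightarrow> real"
  assumes h_meas [measurable]: "h \<in> borel_measurable M"
    and h_ge: "\<And>x. x \<in> space M \<Longrightarrow> a \<le> h x" and "a \<le> T"
  shows "(LBINT t=a..T. prob {x \<in> space M. t \<le> h x}) = expectation (\<lambda>x. min T (h x)) - a"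
proof -
  interpret lborel_M: pair_sigma_finite lborel M
    by (intro pair_sigma_finite.intro lborel.sigma_finite_measure_axioms sigma_finite_measure_axioms)
  define S where "S = {q \<in> space (lborel \<Otimes>\<^sub>M M). a < fst q \<and> fst q < T \<and> fst q \<le> h (snd q)}"
  have S: "S \<in> sets (lborel \<Otimes>\<^sub>M M)"
    unfolding S_def by measurable
  have prob_eq: "indicator {a<..<T} t * prob {x \<in> space M. t \<le> h x} = measure M (Pair t -` S)" for t
    by (auto simp: S_def indicator_def space_pair_measure intro!: arg_cong[where f="measure M"])
  have "(LBINT t=a..T. prob {x \<in> space M. t \<le> h x})
      = (\<integral>t. indicator {a<..<T} t * prob {x \<in> space M. t \<le> h x} \<partial>lborel)"
    using \<open>a \<le> T\<close> by (simp add: interval_lebesgue_integral_def set_lebesgue_integral_def)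
  also have "\<dots> = enn2real (\<integral>\<^sup>+t. emeasure M (Pair t -` S) \<partial>lborel)"
    unfolding prob_eq
    by (subst integral_eq_nn_integral) (auto intro!: borel_measurable_measure_Pair[OF S, simplified]
        simp: emeasure_eq_measure cong: nn_integral_cong)
  also have "(\<integral>\<^sup>+t. emeasure M (Pair t -` S) \<partial>lborel)
      = (\<integral>\<^sup>+x. emeasure lborel ((\<lambda>t. (t, x)) -` S) \<partial>M)"
    using emeasure_pair_measure_alt[OF S] lborel_M.emeasure_pair_measure_alt2[OF S] by simp
  also have "\<dots> = (\<integral>\<^sup>+x. ennreal (min T (h x) - a) \<partial>M)"
  proof (intro nn_integral_cong)
    fix x assume "x \<in> space M"
    then have "(\<lambda>t. (t, x)) -` S = (if h x < T then {a<..h x} else {a<..<T})"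
      by (auto simp: S_def space_pair_measure)
    then show "emeasure lborel ((\<lambda>t. (t, x)) -` S) = ennreal (min T (h x) - a)"
      using h_ge[OF \<open>x \<in> space M\<close>] \<open>a \<le> T\<close> by (simp add: min_def)
  qed
  also have "enn2real \<dots> = expectation (\<lambda>x. min T (h x) - a)"
    by (rule integral_eq_nn_integral[symmetric]) (auto intro: h_ge \<open>a \<le> T\<close>)
  also have "\<dots> = expectation (\<lambda>x. min T (h x)) - a"
  proof -
    have "\<bar>min T (h x)\<bar> \<le> \<bar>a\<bar> + \<bar>T\<bar>" if "x \<in> space M" for x
      using h_ge[OF that] by (simp add: abs_le_iff min_def) linarith
    then have "integrable M (\<lambda>x. min T (h x))"
      by (intro integrable_const_bound[where B="\<bar>a\<bar> + \<bar>T\<bar>"] AE_I2) auto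
    then show ?thesis
      by (simp add: prob_space)
  qed
  finally show ?thesis .
qed


lemma powr_le_powr_iff:
  fixes x y e :: real
  assumes "0 < e" "0 \<le> x" "0 \<le> y"
  shows "x powr e \<le> y powr e \<longleftrightarrow> x \<le> y"
  using assms by (meson powr_mono2 powr_less_mono2 less_imp_le not_le)

lemma powr_inverse_mult_le_iff:
  fixes \<alpha> s c x y :: real
  assumes "0 < \<alpha>" "0 < s" "0 < c" "0 < x" "0 < y"
  shows "s powr (1 / \<alpha>) * x \<le> c powr (1 / \<alpha>) * y \<longleftrightarrow> s \<le> c * (y / x) powr \<alpha>"
proof -
  have root: "(c * (y / x) powr \<alpha>) powr (1 / \<alpha>) = c powr (1 / \<alpha>) * y / x"
    using assms by (simp add: powr_mult powr_powr)
  have "s powr (1 / \<alpha>) * x \<le> c powr (1 / \<alpha>) * y \<longleftrightarrow> s powr (1 / \<alpha>) \<le> c powr (1 / \<alpha>) * y / x"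
    using assms by (simp add: pos_le_divide_eq)
  also have "\<dots> \<longleftrightarrow> s powr (1 / \<alpha>) \<le> (c * (y / x) powr \<alpha>) powr (1 / \<alpha>)"
    by (simp only: root)
  also have "\<dots> \<longleftrightarrow> s \<le> c * (y / x) powr \<alpha>"
    using assms by (intro powr_le_powr_iff) auto
  finally show ?thesis .
qed

locale symmetric_atomless_distribution = real_distribution \<mu> for \<mu> :: "real measure" +
  assumes distr_uminus: "distr \<mu> borel uminus = \<mu>"
    and measure_singleton: "measure \<mu> {c} = 0"
begin

abbreviation joint :: "(real \<times> real) measure" where
  "joint \<equiv> \<mu> \<Otimes>\<^sub>M \<mu>"

sublocale joint: prob_space joint
  by (intro prob_space_pair prob_space_axioms)

lemma sets_joint: "sets joint = sets (borel \<Otimes>\<^sub>M borel)"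
  by (intro sets_pair_measure_cong) simp_all

lemma space_joint [simp]: "space joint = UNIV"
  by (simp add: space_pair_measure)

lemma measurable_joint: "measurable joint N = measurable (borel \<Otimes>\<^sub>M borel) N"
  by (rule measurable_cong_sets[OF sets_joint refl])

lemma sets_Collect_joint: "Measurable.pred (borel \<Otimes>\<^sub>M borel) P \<Longrightarrow> {p. P p} \<in> sets joint"
  by (simp add: pred_def sets_joint space_pair_measure)

lemma distr_mult_sign:
  assumes "s \<in> {-1, 1}"
  shows "distr \<mu> borel ((*) s) = \<mu>"
proof -
  have "(*) (- 1) = (uminus :: real \<Rightarrow> real)" "(*) 1 = (\<lambda>x::real. x)"
    by auto
  with assms show ?thesis
    using distr_uminus by (auto simp: distr_id2)
qed

lemma distr_joint_mult_signs:
  assumes "s \<in> {-1, 1}" "t \<in> {-1, 1}"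
  shows "distr joint (borel \<Otimes>\<^sub>M borel) (\<lambda>(x, y). (s * x, t * y)) = joint"
proof -
  have "distr \<mu> borel ((*) s) \<Otimes>\<^sub>M distr \<mu> borel ((*) t)
      = distr joint (borel \<Otimes>\<^sub>M borel) (\<lambda>(x, y). (s * x, t * y))"
    by (intro pair_measure_distr) (simp_all add: distr_mult_sign[OF assms(2)] sigma_finite_measure_axioms)
  then show ?thesis
    by (simp add: distr_mult_sign[OF assms(1)] distr_mult_sign[OF assms(2)])
qed

lemma measure_vimage_mult_signs:
  assumes st: "s \<in> {-1, 1}" "t \<in> {-1, 1}" and "B \<in> sets joint"
  shows "measure joint ((\<lambda>(x, y). (s * x, t * y)) -` B) = measure joint B"
proof -
  have "measure joint B = measure (distr joint (borel \<Otimes>\<^sub>M borel) (\<lambda>(x, y). (s * x, t * y))) B"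
    by (simp add: distr_joint_mult_signs[OF st])
  also have "\<dots> = measure joint ((\<lambda>(x, y). (s * x, t * y)) -` B \<inter> space joint)"
    using \<open>B \<in> sets joint\<close> unfolding sets_joint by (intro measure_distr) (simp_all add: measurable_joint)
  finally show ?thesis
    by simp
qed

lemma null_sets_line:
  assumes "c \<noteq> 0 \<or> d \<noteq> 0"
  shows "{p. c * fst p = d * snd p} \<in> null_sets joint"
proof -
  let ?L = "{p. c * fst p = d * snd p}"
  have L: "?L \<in> sets joint"
    by (intro sets_Collect_joint) measurable
  have "emeasure joint ?L = (\<integral>\<^sup>+x. emeasure \<mu> (Pair x -` ?L) \<partial>\<mu>)"
    by (rule emeasure_pair_measure_alt[OF L])
  also have "\<dots> = 0"
  proof (cases "d = 0")
    case False
    then have "Pair x -` ?L = {c * x / d}" for x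
      by (auto simp: field_simps)
    then show ?thesis
      by (simp add: emeasure_eq_measure measure_singleton)
  next
    case True
    with assms have "Pair x -` ?L = (if x = 0 then UNIV else {})" for x
      by auto
    then have "(\<integral>\<^sup>+x. emeasure \<mu> (Pair x -` ?L) \<partial>\<mu>)
        = (\<integral>\<^sup>+x. emeasure \<mu> UNIV * indicator {0} x \<partial>\<mu>)"
      by (intro nn_integral_cong) (auto simp: indicator_def)
    also have "\<dots> = 0"
      by (simp add: emeasure_eq_measure measure_singleton)
    finally show ?thesis .
  qed
  finally show ?thesis
    using L by (intro null_setsI)
qed

lemma AE_off_axes: "AE p in joint. fst p \<noteq> 0 \<and> snd p \<noteq> 0"
proof -
  have "{p. 1 * fst p = 0 * snd p} \<union> {p. 0 * fst p = 1 * snd p} \<in> null_sets joint"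
    by (intro null_sets.Un null_sets_line) simp_all
  then show ?thesis
    by (rule AE_I') auto
qed

lemma measure_positive_quadrant:
  assumes A: "A \<in> sets joint" and A_abs: "\<And>x y. (x, y) \<in> A \<longleftrightarrow> (\<bar>x\<bar>, \<bar>y\<bar>) \<in> A"
  shows "measure joint (A \<inter> {p. 0 < fst p \<and> 0 < snd p}) = measure joint A / 4"
proof -
  define Q where "Q \<sigma> = A \<inter> {p. 0 < fst \<sigma> * fst p \<and> 0 < snd \<sigma> * snd p}" for \<sigma> :: "real \<times> real"
  define S :: "(real \<times> real) set" where "S = {-1, 1} \<times> {-1, 1}"
  have Q_sets: "Q \<sigma> \<in> sets joint" for \<sigma>
  proof -
    have "{p. 0 < fst \<sigma> * fst p \<and> 0 < snd \<sigma> * snd p} \<in> sets joint"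
      by (intro sets_Collect_joint) measurable
    then show ?thesis
      unfolding Q_def using A by blast
  qed
  have Q_eq: "measure joint (Q \<sigma>) = measure joint (Q (1, 1))" if "\<sigma> \<in> S" for \<sigma>
  proof -
    obtain s t where \<sigma>: "\<sigma> = (s, t)" and st: "s \<in> {-1, 1}" "t \<in> {-1, 1}"
      using \<open>\<sigma> \<in> S\<close> by (auto simp: S_def)
    have "(s * x, t * y) \<in> A \<longleftrightarrow> (x, y) \<in> A" for x y
    proof -
      have "\<bar>s * x\<bar> = \<bar>x\<bar>" "\<bar>t * y\<bar> = \<bar>y\<bar>"
        using st by (auto simp: abs_mult)
      then show ?thesis
        using A_abs[of "s * x" "t * y"] A_abs[of x y] by simp
    qed
    then have "(\<lambda>(x, y). (s * x, t * y)) -` Q (1, 1) = Q \<sigma>"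
      using st by (auto simp: Q_def \<sigma>)
    then show ?thesis
      using measure_vimage_mult_signs[OF st Q_sets[of "(1, 1)"]] by simp
  qed
  have "measure joint A = measure joint (\<Union>\<sigma>\<in>S. Q \<sigma>)"
  proof (rule measure_eq_AE)
    show "AE p in joint. p \<in> A \<longleftrightarrow> p \<in> (\<Union>\<sigma>\<in>S. Q \<sigma>)"
      using AE_off_axes
    proof eventually_elim
      case (elim p)
      let ?\<sigma> = "(sgn (fst p), sgn (snd p))"
      have "?\<sigma> \<in> S"
        using elim by (auto simp: S_def sgn_if)
      moreover have "p \<in> A \<Longrightarrow> p \<in> Q ?\<sigma>"
        using elim by (auto simp: Q_def sgn_if)
      ultimately show ?case
        unfolding Q_def by blast
    qed
  qed (use A Q_sets S_def in auto)
  also have "\<dots> = (\<Sum>\<sigma>\<in>S. measure joint (Q \<sigma>))"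
  proof (rule measure_finite_Union)
    show "finite S" "Q ` S \<subseteq> sets joint"
      using Q_sets by (auto simp: S_def)
    have sign_unique: "s = s'" if "s \<in> {-1, 1}" "s' \<in> {-1, 1}" "0 < s * x" "0 < s' * x"
      for s s' x :: real
      using that by auto
    show "disjoint_family_on Q S"
      unfolding disjoint_family_on_def Q_def S_def using sign_unique by (fastforce simp: prod_eq_iff)
    show "emeasure joint (Q \<sigma>) \<noteq> \<infinity>" for \<sigma>
      by simp
  qed
  also have "\<dots> = (\<Sum>\<sigma>\<in>S. measure joint (Q (1, 1)))"
    by (rule sum.cong) (simp_all add: Q_eq)
  also have "\<dots> = 4 * measure joint (Q (1, 1))"
    by (simp add: S_def card_cartesian_product)
  finally show ?thesis
    by (simp add: Q_def)
qed

text \<open>The paper's \<phi>(x, y) is sector_prob (x powr (1 / \<alpha>)) (y powr (1 / \<alpha>)).\<close>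

definition sector_prob :: "real \<Rightarrow> real \<Rightarrow> real" where
  "sector_prob c d = measure joint {p. 0 \<le> fst p \<and> 0 \<le> snd p \<and> c * fst p \<le> d * snd p}"

lemma measure_nonneg_quadrant: "measure joint {p. 0 \<le> fst p \<and> 0 \<le> snd p} = 1 / 4"
proof -
  have "{p. 0 \<le> fst p \<and> 0 \<le> snd p} \<in> sets joint" "{p. 0 < fst p \<and> 0 < snd p} \<in> sets joint"
    by (intro sets_Collect_joint; measurable)+
  then have "measure joint {p. 0 \<le> fst p \<and> 0 \<le> snd p} = measure joint (UNIV \<inter> {p. 0 < fst p \<and> 0 < snd p})"
    by (intro measure_eq_AE) (use AE_off_axes in auto)
  also have "\<dots> = 1 / 4"
    by (subst measure_positive_quadrant) (use sets.top[of joint] joint.prob_space in simp_all)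
  finally show ?thesis .
qed

lemma sector_prob_add_swap:
  assumes "c \<noteq> 0 \<or> d \<noteq> 0"
  shows "sector_prob c d + sector_prob d c = 1 / 4"
proof -
  define A where "A = {p::real \<times> real. 0 \<le> fst p \<and> 0 \<le> snd p \<and> c * fst p \<le> d * snd p}"
  define B where "B = {p::real \<times> real. 0 \<le> fst p \<and> 0 \<le> snd p \<and> d * snd p \<le> c * fst p}"
  have sets: "A \<in> sets joint" "B \<in> sets joint"
    unfolding A_def B_def by (intro sets_Collect_joint; measurable)+
  interpret pair_sigma_finite \<mu> \<mu>
    by (intro pair_sigma_finite.intro sigma_finite_measure_axioms)
  have "sector_prob d c = measure joint ((\<lambda>(x, y). (y, x)) -` B \<inter> space joint)"
    unfolding sector_prob_def B_def by (intro arg_cong[where f="measure joint"]) auto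
  also have "\<dots> = measure (distr joint joint (\<lambda>(x, y). (y, x))) B"
    using sets by (intro measure_distr[symmetric] measurable_pair_swap')
  also have "distr joint joint (\<lambda>(x, y). (y, x)) = joint"
    by (rule distr_pair_swap[symmetric])
  finally have swap: "sector_prob d c = measure joint B" .
  have "A \<inter> B \<subseteq> {p. c * fst p = d * snd p}"
    unfolding A_def B_def by auto
  then have "A \<inter> B \<in> null_sets joint"
    using null_sets_line[OF assms] sets by (blast intro: null_sets_subset)
  then have "measure joint (A \<union> B) = measure joint A + measure joint B"
    using sets by (intro measure_Un_AE) (auto elim: AE_I' simp: joint.fmeasurable_eq_sets)
  moreover have "A \<union> B = {p. 0 \<le> fst p \<and> 0 \<le> snd p}"
    unfolding A_def B_def by auto
  ultimately show ?thesis
    using swap measure_nonneg_quadrant by (simp add: sector_prob_def A_def)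
qed

lemma sector_prob_nonneg: "0 \<le> sector_prob c d"
  by (simp add: sector_prob_def)

lemma sector_prob_le_1: "sector_prob c d \<le> 1"
  by (simp add: sector_prob_def)

lemma borel_measurable_sector_prob:
  assumes [measurable]: "u \<in> borel_measurable borel" "v \<in> borel_measurable borel"
  shows "(\<lambda>t. sector_prob (u t) (v t)) \<in> borel_measurable borel"
proof -
  let ?S = "{q \<in> space (borel \<Otimes>\<^sub>M joint).
    0 \<le> fst (snd q) \<and> 0 \<le> snd (snd q) \<and> u (fst q) * fst (snd q) \<le> v (fst q) * snd (snd q)}"
  have "?S \<in> sets (borel \<Otimes>\<^sub>M joint)"
    unfolding sets_pair_measure_cong[OF refl sets_joint] space_pair_measure by measurable
  then have "(\<lambda>t. measure joint (Pair t -` ?S)) \<in> borel_measurable borel"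
    by (rule joint.borel_measurable_measure_Pair)
  moreover have "Pair t -` ?S = {p. 0 \<le> fst p \<and> 0 \<le> snd p \<and> u t * fst p \<le> v t * snd p}" for t
    by (auto simp: space_pair_measure)
  ultimately show ?thesis
    by (simp add: sector_prob_def)
qed

lemma interval_integral_sector_prob_complementary:
  assumes "0 < a"
  shows "(LBINT t=0..a. sector_prob ((a - t) powr r) (t powr r)) = a / 8"
proof -
  have "(LBINT t=0..a. sector_prob ((a - t) powr r) (t powr r)) = a * (1 / 4) / 2"
  proof (rule interval_integral_eq_half_if_reflection_sum)
    have "(\<lambda>t. sector_prob ((a - t) powr r) (t powr r)) \<in> borel_measurable borel"
      by (intro borel_measurable_sector_prob) measurable
    then have "integrable lborel (\<lambda>t. indicator {0<..<a} t *\<^sub>R sector_prob ((a - t) powr r) (t powr r))"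
      by (intro integrableI_bounded_set_indicator[where B=1])
        (use assms in \<open>auto simp: sector_prob_nonneg sector_prob_le_1\<close>)
    then show "integrable lborel (\<lambda>t. indicator {0<..<a} t * sector_prob ((a - t) powr r) (t powr r))"
      by simp
    show "sector_prob ((a - t) powr r) (t powr r) + sector_prob ((a - (a - t)) powr r) ((a - t) powr r) = 1 / 4"
      if "0 < t" "t < a" for t
      using that by (simp add: sector_prob_add_swap)
  qed (use assms in simp)
  then show ?thesis
    by simp
qed

lemma sector_prob_eq_quarter_measure:
  assumes "0 < \<alpha>" "0 < a" "a < t"
  shows "sector_prob ((t - a) powr (1 / \<alpha>)) (a powr (1 / \<alpha>))
    = measure joint {p. t \<le> a * (1 + \<bar>snd p / fst p\<bar> powr \<alpha>)} / 4"
proof -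
  define c d where "c = (t - a) powr (1 / \<alpha>)" and "d = a powr (1 / \<alpha>)"
  define H where "H = {p::real \<times> real. t \<le> a * (1 + \<bar>snd p / fst p\<bar> powr \<alpha>)}"
  define S where "S = {p::real \<times> real. 0 \<le> fst p \<and> 0 \<le> snd p \<and> c * fst p \<le> d * snd p}"
  have sets: "H \<in> sets joint" "S \<in> sets joint" "{p. 0 < fst p \<and> 0 < snd p} \<in> sets joint"
    unfolding H_def S_def by (intro sets_Collect_joint; measurable)+
  have "sector_prob c d = measure joint (H \<inter> {p. 0 < fst p \<and> 0 < snd p})"
    unfolding sector_prob_def S_def[symmetric]
  proof (rule measure_eq_AE)
    show "AE p in joint. p \<in> S \<longleftrightarrow> p \<in> H \<inter> {p. 0 < fst p \<and> 0 < snd p}"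
      using AE_off_axes
    proof eventually_elim
      case (elim p)
      show ?case
      proof (cases "0 < fst p \<and> 0 < snd p")
        case True
        then have "c * fst p \<le> d * snd p \<longleftrightarrow> t - a \<le> a * (snd p / fst p) powr \<alpha>"
          unfolding c_def d_def using assms by (intro powr_inverse_mult_le_iff) auto
        then show ?thesis
          using True by (auto simp: S_def H_def algebra_simps)
      qed (use elim in \<open>auto simp: S_def\<close>)
    qed
  qed (use sets in auto)
  also have "\<dots> = measure joint H / 4"
    by (rule measure_positive_quadrant[OF sets(1)]) (simp add: H_def)
  finally show ?thesis
    by (simp add: c_def d_def H_def)
qed

lemma interval_integral_sector_prob_shifted:
  assumes "0 < \<alpha>" "0 < a" "a \<le> T"
  shows "(LBINT t=a..T. sector_prob ((t - a) powr (1 / \<alpha>)) (a powr (1 / \<alpha>)))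
    = 1 / 4 * (\<integral>p. min T (a * (1 + \<bar>snd p / fst p\<bar> powr \<alpha>)) \<partial>joint) - a / 4"
proof -
  let ?h = "\<lambda>p::real \<times> real. a * (1 + \<bar>snd p / fst p\<bar> powr \<alpha>)"
  have "(LBINT t=a..T. sector_prob ((t - a) powr (1 / \<alpha>)) (a powr (1 / \<alpha>)))
      = (LBINT t=a..T. joint.prob {p \<in> space joint. t \<le> ?h p} / 4)"
    using assms by (intro interval_integral_cong) (auto simp: einterval_def sector_prob_eq_quarter_measure)
  also have "\<dots> = (LBINT t=a..T. joint.prob {p \<in> space joint. t \<le> ?h p}) / 4"
    by simp
  also have "(LBINT t=a..T. joint.prob {p \<in> space joint. t \<le> ?h p}) = joint.expectation (\<lambda>p. min T (?h p)) - a"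
  proof (rule joint.interval_integral_prob_ge_eq_expectation_min)
    show "?h \<in> borel_measurable joint"
      unfolding measurable_joint by measurable
  qed (use assms in auto)
  finally show ?thesis
    by simp
qed

end

lemma symmetric_atomless_distribution_if_char_exp_neg_abs_powr:
  assumes "real_distribution \<mu>" "0 < \<alpha>"
    and char_eq: "\<And>u. char \<mu> u = exp (- complex_of_real (\<bar>u\<bar> powr \<alpha>))"
  shows "symmetric_atomless_distribution \<mu>"
proof -
  interpret real_distribution \<mu> by fact
  show ?thesis
  proof
    have "real_distribution (distr \<mu> borel uminus)"
      by (intro real_distribution_distr) simp
    moreover have "char (distr \<mu> borel uminus) u = char \<mu> u" for u
    proof -
      have "char (distr \<mu> borel uminus) u = char \<mu> (- u)"
        unfolding char_def by (subst integral_distr) auto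
      then show ?thesis
        by (simp add: char_eq)
    qed
    ultimately show "distr \<mu> borel uminus = \<mu>"
      using assms(1) by (intro Levy_uniqueness) auto
    have char_real: "char \<mu> = (\<lambda>u. complex_of_real (exp (- (\<bar>u\<bar> powr \<alpha>))))"
      by (rule ext) (simp only: char_eq of_real_minus[symmetric] exp_of_real)
    have "integrable lborel (\<lambda>u. complex_of_real (exp (- (\<bar>u\<bar> powr \<alpha>))))"
      using integrable_exp_neg_abs_powr[OF \<open>0 < \<alpha>\<close>] by (rule integrable_of_real)
    then show "measure \<mu> {c} = 0" for c
      unfolding char_real[symmetric] by (rule measure_singleton_eq_0_if_integrable_char)
  qed
qed

lemma stable_phi_scale:
  assumes "0 < a" "0 \<le> x" "0 \<le> y"
  shows "stable_phi M Z Z' \<alpha> (a * x) (a * y) = stable_phi M Z Z' \<alpha> x y"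
proof -
  have "(a * x) powr (1 / \<alpha>) * z \<le> (a * y) powr (1 / \<alpha>) * z'
      \<longleftrightarrow> x powr (1 / \<alpha>) * z \<le> y powr (1 / \<alpha>) * z'" for z z' :: real
    using assms by (simp add: powr_mult mult.assoc)
  then show ?thesis
    by (simp add: stable_phi_def)
qed

lemma stable_phi_eq_measure_distr:
  assumes [measurable]: "Z \<in> borel_measurable M" "Z' \<in> borel_measurable M"
  shows "stable_phi M Z Z' \<alpha> x y = measure (distr M (borel \<Otimes>\<^sub>M borel) (\<lambda>\<omega>. (Z \<omega>, Z' \<omega>)))
    {p. 0 \<le> fst p \<and> 0 \<le> snd p \<and> x powr (1 / \<alpha>) * fst p \<le> y powr (1 / \<alpha>) * snd p}"
proof -
  define c d where "c = x powr (1 / \<alpha>)" and "d = y powr (1 / \<alpha>)"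
  have "{p \<in> space (borel \<Otimes>\<^sub>M borel). 0 \<le> fst p \<and> 0 \<le> snd p \<and> c * fst p \<le> d * snd p}
      \<in> sets (borel \<Otimes>\<^sub>M borel)"
    by measurable
  then show ?thesis
    unfolding stable_phi_def c_def[symmetric] d_def[symmetric]
    by (simp add: measure_distr space_pair_measure) (intro arg_cong[where f = "measure M"]; auto)
qed

lemma (in prob_space) distr_pair_eq_pair_measure_if_indep_char_eq:
  assumes "random_variable borel Z" "random_variable borel Z'" "indep_var borel Z borel Z'"
    and "\<And>u. char (distr M borel Z') u = char (distr M borel Z) u"
  shows "distr M (borel \<Otimes>\<^sub>M borel) (\<lambda>\<omega>. (Z \<omega>, Z' \<omega>)) = distr M borel Z \<Otimes>\<^sub>M distr M borel Z"
proof -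
  have "distr M borel Z' = distr M borel Z"
    using assms(1,2,4) by (intro Levy_uniqueness) (simp_all add: fun_eq_iff)
  then show ?thesis
    using assms(3) by (simp add: indep_var_distribution_eq)
qed

theorem lemma9:
  fixes M :: "'a measure" and Z Z' :: "'a \<Rightarrow> real"
    and \<alpha> T x y a b :: real
  assumes "prob_space M"
    and "0 < \<alpha>" and "\<alpha> \<le> 2"
    and "Z \<in> borel_measurable M" and "Z' \<in> borel_measurable M"
    and "prob_space.indep_var M borel Z borel Z'"
    and "\<And>u. char (distr M borel Z) u = exp (- complex_of_real (\<bar>u\<bar> powr \<alpha>))"
    and "\<And>u. char (distr M borel Z') u = exp (- complex_of_real (\<bar>u\<bar> powr \<alpha>))"
    and "0 < T"
    and "0 < x" and "0 < y" and "0 < b"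
    and "0 < a" and "a \<le> T"
  shows "stable_phi M Z Z' \<alpha> x y + stable_phi M Z Z' \<alpha> y x = 1 / 4
    \<and> stable_phi M Z Z' \<alpha> (a * x) (a * y) = stable_phi M Z Z' \<alpha> x y
    \<and> (LBINT t=0..a. stable_phi M Z Z' \<alpha> (a - t) t) = a / 8
    \<and> (LBINT t=a..T. stable_phi M Z Z' \<alpha> (t - a) a) =
           1 / 4 * prob_space.expectation M
                     (\<lambda>\<omega>. min T (a * inverse (stable_D Z Z' \<alpha> \<omega>))) - a / 4"
proof -
  \<comment> \<open>\<alpha> \<le> 2 only ensures that such Z exist, and b does not occur in the conclusion.\<close>
  interpret prob_space M by fact
  interpret law: symmetric_atomless_distribution "distr M borel Z"
    using assms(2,4,7) by (intro symmetric_atomless_distribution_if_char_exp_neg_abs_powr) simp_all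
  have joint_law: "distr M (borel \<Otimes>\<^sub>M borel) (\<lambda>\<omega>. (Z \<omega>, Z' \<omega>)) = law.joint"
    using assms(4-8) by (intro distr_pair_eq_pair_measure_if_indep_char_eq) simp_all
  have phi: "stable_phi M Z Z' \<alpha> u v = law.sector_prob (u powr (1 / \<alpha>)) (v powr (1 / \<alpha>))" for u v
    using assms(4,5) by (simp add: stable_phi_eq_measure_distr joint_law law.sector_prob_def)
  have expectation_eq: "expectation (\<lambda>\<omega>. min T (a * inverse (stable_D Z Z' \<alpha> \<omega>)))
      = (\<integral>p. min T (a * (1 + \<bar>snd p / fst p\<bar> powr \<alpha>)) \<partial>law.joint)"
    unfolding joint_law[symmetric] using assms(4,5) by (subst integral_distr) (simp_all add: stable_D_def)
  show ?thesis
  proof (intro conjI)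
    show "stable_phi M Z Z' \<alpha> x y + stable_phi M Z Z' \<alpha> y x = 1 / 4"
      using assms(10) by (simp add: phi law.sector_prob_add_swap)
    show "stable_phi M Z Z' \<alpha> (a * x) (a * y) = stable_phi M Z Z' \<alpha> x y"
      using assms(10,11,13) by (simp add: stable_phi_scale)
    show "(LBINT t=0..a. stable_phi M Z Z' \<alpha> (a - t) t) = a / 8"
      using assms(13) by (simp add: phi law.interval_integral_sector_prob_complementary)
    show "(LBINT t=a..T. stable_phi M Z Z' \<alpha> (t - a) a) =
        1 / 4 * expectation (\<lambda>\<omega>. min T (a * inverse (stable_D Z Z' \<alpha> \<omega>))) - a / 4"
      using assms(2,13,14) by (simp add: phi expectation_eq law.interval_integral_sector_prob_shifted)
  qed
qed

end
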